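(* For every positive integer $B$, every max-min $B$-bounded space algorithm $ALG$ for the classic bin packing problem, and every positive integer $m$ with $m\ge 2B$ and $m$ divisible by $3$, there exists a sorted item sequence $I$ such that $OPT(I)=m$ and $ALG(I)\ge\frac{7}{6}\cdot OPT(I)-B$.
   Context: Classic bin packing: an item sequence $I=(a_1,\dots,a_n)\in(0,1]^n$ must be packed into bins of capacity $1$; $OPT(I)$ is the minimum number of non-empty bins, $ALG(I)$ the number of non-empty bins used by algorithm $ALG$. $I$ is sorted if $a_1\ge\cdots\ge a_n$. A max-min algorithm first sorts the input in non-increasing order and then repeatedly takes either the head (largest) or the tail (smallest) item of the currently remaining sorted sequence and packs it into a bin, each decision depending only on the items already packed and the current head and tail items, without seeing other remaining items. A bin is open if it contains an item and the algorithm may still pack items into it; closed bins never receive further items. A $B$-bounded space algorithm keeps at most $B$ open bins at any time. *)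

theory Defs
  imports Main "HOL.Real"
begin

definition valid_items :: "real list \<Rightarrow> bool" where
  "valid_items I \<longleftrightarrow> (\<forall>x\<in>set I. 0 < x \<and> x \<le> 1)"

definition sorted_input :: "real list \<Rightarrow> bool" where
  "sorted_input I \<longleftrightarrow> sorted_wrt (\<ge>) I"

definition opt :: "real list \<Rightarrow> nat" where
  "opt I = (LEAST k. \<exists>f::nat \<Rightarrow> nat. (\<forall>i<length I. f i < k) \<and>
      (\<forall>j. (\<Sum>i | i < length I \<and> f i = j. I ! i) \<le> 1))"

text \<open>A packing step: (took the head?, item size, bin index, set of bins closed
  at this step). The history is the list of steps performed so far.\<close>
type_synonym step = "bool \<times> real \<times> nat \<times> nat set"
type_synonym history = "step list"

text \<open>A max-min algorithm: given the history (items already packed, where, and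
  which bins were closed) and the current head (largest) and tail (smallest)
  remaining items, it decides whether to take the head (True) or the tail (False),
  the bin to put it into, and the set of bins to close.\<close>
type_synonym maxmin_alg = "history \<Rightarrow> real \<Rightarrow> real \<Rightarrow> bool \<times> nat \<times> nat set"

definition step_item :: "step \<Rightarrow> real" where "step_item s = fst (snd s)"
definition step_bin :: "step \<Rightarrow> nat" where "step_bin s = fst (snd (snd s))"
definition step_close :: "step \<Rightarrow> nat set" where "step_close s = snd (snd (snd s))"

definition used_bins :: "history \<Rightarrow> nat set" where
  "used_bins h = step_bin ` set h"

definition closed_bins :: "history \<Rightarrow> nat set" where
  "closed_bins h = (\<Union>s\<in>set h. step_close s)"

definition open_bins :: "history \<Rightarrow> nat set" where
  "open_bins h = used_bins h - closed_bins h"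

definition bin_load :: "history \<Rightarrow> nat \<Rightarrow> real" where
  "bin_load h b = sum_list (map step_item (filter (\<lambda>s. step_bin s = b) h))"

function run :: "maxmin_alg \<Rightarrow> history \<Rightarrow> real list \<Rightarrow> history" where
  "run A h xs =
     (if xs = [] then h
      else (case A h (hd xs) (last xs) of (t, b, C) \<Rightarrow>
              let x = (if t then hd xs else last xs);
                  rest = (if t then tl xs else butlast xs)
              in run A (h @ [(t, x, b, C)]) rest))"
  by pat_completeness auto
termination
  by (relation "measure (\<lambda>(A, h, xs). length xs)") (auto simp: length_butlast)

definition ALG :: "maxmin_alg \<Rightarrow> real list \<Rightarrow> nat" where
  "ALG A I = card (used_bins (run A [] I))"

definition legal_step :: "nat \<Rightarrow> history \<Rightarrow> step \<Rightarrow> bool" where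
  "legal_step B h s \<longleftrightarrow> step_bin s \<notin> closed_bins h \<and>
     bin_load h (step_bin s) + step_item s \<le> 1 \<and>
     card (open_bins (h @ [s])) \<le> B"

definition legal_run :: "nat \<Rightarrow> history \<Rightarrow> bool" where
  "legal_run B h \<longleftrightarrow> (\<forall>i<length h. legal_step B (take i h) (h ! i))"

definition maxmin_bounded :: "nat \<Rightarrow> maxmin_alg \<Rightarrow> bool" where
  "maxmin_bounded B A \<longleftrightarrow>
     (\<forall>I. sorted_input I \<and> valid_items I \<longrightarrow> legal_run B (run A [] I))"

end

theory Submission
  imports Defs "HOL-Library.Multiset"
begin

(* Take items of sizes L = 153/300, M = 103/300, S = 44/300 and the two sorted inputs
   L^m S^3m and L^m M^m S^m; both have optimum m, since L > 1/2, L + M + S = 1 and L + 3 S <= 1.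
   On either input a max-min algorithm sees head L and tail S, hence makes the same
   decisions, until it has taken m heads or m tails, at time tau say.  If it took all L
   first, run it on L^m S^3m and give weight 6 to an L packed before tau, 0 to an S packed
   before tau and 1 to every item packed after tau; otherwise run it on L^m M^m S^m and
   give weight 1 to S and 3 to L and M.  The total weight is at least 7m.  Within one bin,
   the items packed before tau weigh at most 6, and so do those packed after tau; a bin
   holds items of both kinds only if it is open at time tau, and at most B bins are.
   Hence 6 (ALG + B) >= 7m. *)

lemma butlast_replicate_Suc: "butlast (replicate (Suc n) x) = replicate n x"
  by (induction n) auto

lemma sorted_wrt_replicate: "R x x \<Longrightarrow> sorted_wrt R (replicate n x)"
  by (induction n) auto

lemma sum_list_map_group:
  assumes "finite K" "\<kappa> ` set xs \<subseteq> K"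
  shows "sum_list (map f xs) = (\<Sum>k\<in>K. sum_list (map f (filter (\<lambda>x. \<kappa> x = k) xs)))"
  using assms(2)
proof (induction xs)
  case (Cons x xs)
  have "(\<Sum>k\<in>K. sum_list (map f (filter (\<lambda>x. \<kappa> x = k) (x # xs))))
      = (\<Sum>k\<in>K. (if \<kappa> x = k then f x else 0) + sum_list (map f (filter (\<lambda>x. \<kappa> x = k) xs)))"
    by (rule sum.cong) auto
  also have "\<dots> = f x + sum_list (map f xs)"
    using Cons assms(1) by (simp add: sum.distrib)
  finally show ?case by simp
qed simp

lemma sum_list_map_eq_sum_of_nat_count:
  fixes f :: "'a \<Rightarrow> 'b::comm_semiring_1"
  assumes "finite X" "set xs \<subseteq> X"
  shows "sum_list (map f xs) = (\<Sum>v\<in>X. of_nat (count_list xs v) * f v)"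
  using assms(2)
proof (induction xs)
  case (Cons x xs)
  have "(\<Sum>v\<in>X. of_nat (count_list (x # xs) v) * f v)
      = (\<Sum>v\<in>X. (if x = v then f v else 0) + of_nat (count_list xs v) * f v)"
    by (rule sum.cong) (auto simp: algebra_simps)
  also have "\<dots> = f x + sum_list (map f xs)"
    using Cons assms(1) by (simp add: sum.distrib)
  finally show ?case by simp
qed simp

lemma sum_list_map_mset_eq:
  fixes f :: "'a \<Rightarrow> 'b::comm_monoid_add"
  assumes "mset xs = mset ys"
  shows "sum_list (map f xs) = sum_list (map f ys)"
proof -
  have "sum_list (map f xs) = sum_mset (mset (map f xs))"
    by (rule sum_mset_sum_list[symmetric])
  also have "\<dots> = sum_mset (mset (map f ys))"
    using assms by simp
  also have "\<dots> = sum_list (map f ys)"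
    by (rule sum_mset_sum_list)
  finally show ?thesis .
qed

section \<open>Runs of a max-min algorithm\<close>

definition next_step :: "maxmin_alg \<Rightarrow> history \<Rightarrow> real \<Rightarrow> real \<Rightarrow> step" where
  "next_step A h x y = (case A h x y of (t, b, C) \<Rightarrow> (t, if t then x else y, b, C))"

lemma fst_next_step [simp]: "fst (next_step A h x y) = fst (A h x y)"
  by (simp add: next_step_def split: prod.split)

lemma step_item_next_step [simp]:
  "step_item (next_step A h x y) = (if fst (A h x y) then x else y)"
  by (simp add: next_step_def step_item_def split: prod.split)

declare run.simps [simp del]

lemma run_Nil [simp]: "run A h [] = h"
  by (subst run.simps) simp

lemma run_step:
  assumes "xs \<noteq> []"
  shows "run A h xs = (let s = next_step A h (hd xs) (last xs)
           in run A (h @ [s]) (if fst s then tl xs else butlast xs))"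
  using assms by (subst run.simps) (simp add: next_step_def Let_def split: prod.split)

lemma run_eq_append:
  "\<exists>q. run A h xs = h @ q \<and> mset (map step_item q) = mset xs"
proof (induction "length xs" arbitrary: h xs rule: less_induct)
  case less
  show ?case
  proof (cases "xs = []")
    case False
    define s where "s = next_step A h (hd xs) (last xs)"
    define rest where "rest = (if fst s then tl xs else butlast xs)"
    have "length rest < length xs"
      using False by (simp add: rest_def)
    then obtain q where q: "run A (h @ [s]) rest = (h @ [s]) @ q" "mset (map step_item q) = mset rest"
      using less by blast
    have "mset xs = add_mset (hd xs) (mset (tl xs))" "mset xs = add_mset (last xs) (mset (butlast xs))"
      using False by (cases xs, simp_all) (cases xs rule: rev_cases, simp_all)
    then have "mset xs = add_mset (step_item s) (mset rest)"
      by (simp add: s_def rest_def)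
    then show ?thesis
      using False q by (intro exI[of _ "s # q"]) (simp add: run_step s_def rest_def Let_def)
  qed simp
qed

primrec uniform_history :: "maxmin_alg \<Rightarrow> real \<Rightarrow> real \<Rightarrow> nat \<Rightarrow> history" where
  "uniform_history A x y 0 = []"
| "uniform_history A x y (Suc k) =
     uniform_history A x y k @ [next_step A (uniform_history A x y k) x y]"

definition heads_taken :: "history \<Rightarrow> nat" where
  "heads_taken h = length (filter fst h)"

definition tails_taken :: "history \<Rightarrow> nat" where
  "tails_taken h = length (filter (\<lambda>s. \<not> fst s) h)"

lemma heads_taken_snoc [simp]: "heads_taken (h @ [s]) = heads_taken h + (if fst s then 1 else 0)"
  by (simp add: heads_taken_def)

lemma tails_taken_snoc [simp]: "tails_taken (h @ [s]) = tails_taken h + (if fst s then 0 else 1)"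
  by (simp add: tails_taken_def)

lemma heads_taken_Nil [simp]: "heads_taken [] = 0" and tails_taken_Nil [simp]: "tails_taken [] = 0"
  by (simp_all add: heads_taken_def tails_taken_def)

lemma heads_plus_tails_taken: "heads_taken h + tails_taken h = length h"
  unfolding heads_taken_def tails_taken_def by (rule sum_length_filter_compl)

lemma length_uniform_history [simp]: "length (uniform_history A x y k) = k"
  by (induction k) simp_all

lemma step_items_uniform_history: "step_item ` set (uniform_history A x y k) \<subseteq> {x, y}"
  by (induction k) auto

lemma sum_list_uniform_history:
  "sum_list (map (f \<circ> step_item) (uniform_history A x y k)) =
     of_nat (heads_taken (uniform_history A x y k)) * f x
     + of_nat (tails_taken (uniform_history A x y k)) * (f y :: 'a :: comm_semiring_1)"
  by (induction k) (simp_all add: algebra_simps)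

lemma run_uniform_prefix:
  assumes "\<And>j. j < k \<Longrightarrow> heads_taken (uniform_history A x y j) < a \<and> tails_taken (uniform_history A x y j) < c"
  shows "run A [] (replicate a x @ mid @ replicate c y) =
    run A (uniform_history A x y k)
      (replicate (a - heads_taken (uniform_history A x y k)) x @ mid @
       replicate (c - tails_taken (uniform_history A x y k)) y)"
  using assms
proof (induction k)
  case (Suc k)
  let ?h = "uniform_history A x y k"
  obtain a' c' where a': "a - heads_taken ?h = Suc a'" and c': "c - tails_taken ?h = Suc c'"
    using Suc.prems[of k] by (metis Suc_diff_Suc lessI)
  let ?xs = "replicate (Suc a') x @ mid @ replicate (Suc c') y"
  have "run A [] (replicate a x @ mid @ replicate c y) = run A ?h ?xs"
    using Suc a' c' by simp
  also have "\<dots> = run A (?h @ [next_step A ?h x y])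
      (if fst (A ?h x y) then replicate a' x @ mid @ replicate (Suc c') y
       else replicate (Suc a') x @ mid @ replicate c' y)"
    by (simp add: run_step Let_def butlast_append butlast_replicate_Suc del: replicate_Suc)
  moreover have "a - Suc (heads_taken ?h) = a'" "c - Suc (tails_taken ?h) = c'"
    using a' c' by simp_all
  ultimately show ?case
    using a' c' by (cases "fst (A ?h x y)") simp_all
qed simp

lemma uniform_history_stopping_time:
  assumes "0 < m"
  obtains k where "0 < k"
    and "\<And>j. j < k \<Longrightarrow> heads_taken (uniform_history A x y j) < m \<and> tails_taken (uniform_history A x y j) < m"
    and "heads_taken (uniform_history A x y k) \<le> m" "tails_taken (uniform_history A x y k) \<le> m"
    and "heads_taken (uniform_history A x y k) = m \<or> tails_taken (uniform_history A x y k) = m"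
proof -
  define H where "H k = heads_taken (uniform_history A x y k)" for k
  define T where "T k = tails_taken (uniform_history A x y k)" for k
  define k where "k = (LEAST k. m \<le> H k \<or> m \<le> T k)"
  have "H (2 * m) + T (2 * m) = 2 * m"
    using heads_plus_tails_taken by (simp add: H_def T_def)
  then have "m \<le> H (2 * m) \<or> m \<le> T (2 * m)"
    by linarith
  then have stop: "m \<le> H k \<or> m \<le> T k"
    unfolding k_def by (rule LeastI)
  have before: "H j < m \<and> T j < m" if "j < k" for j
    using not_less_Least[of j "\<lambda>k. m \<le> H k \<or> m \<le> T k"] that by (auto simp: k_def)
  have "k \<noteq> 0"
  proof
    assume "k = 0"
    then show False
      using stop assms by (simp add: H_def T_def)
  qed
  then obtain p where p: "k = Suc p"
    using not0_implies_Suc by blast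
  have "H k \<le> Suc (H p)" "T k \<le> Suc (T p)"
    by (simp_all add: p H_def T_def)
  then have "H k \<le> m" "T k \<le> m"
    using before[of p] p by simp_all
  with before stop \<open>k \<noteq> 0\<close> show thesis
    by (intro that[of k]) (auto simp: H_def T_def)
qed

section \<open>Bounded space and weights of bins\<close>

lemma legal_run_snoc: "legal_run B (h @ [s]) \<longleftrightarrow> legal_run B h \<and> legal_step B h s"
  by (auto simp: legal_run_def nth_append less_Suc_eq)

lemma legal_run_appendD: "legal_run B (h @ q) \<Longrightarrow> legal_run B h"
  by (induction q rule: rev_induct) (simp_all add: legal_run_snoc flip: append_assoc)

lemma closed_bins_append [simp]: "closed_bins (h @ q) = closed_bins h \<union> closed_bins q"
  by (simp add: closed_bins_def)

lemma bin_load_append [simp]: "bin_load (h @ q) b = bin_load h b + bin_load q b"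
  by (simp add: bin_load_def)

lemma bin_load_le_one: "legal_run B h \<Longrightarrow> bin_load h b \<le> 1"
  by (induction h rule: rev_induct) (auto simp: legal_run_snoc legal_step_def bin_load_def)

lemma legal_run_bin_not_closed:
  "legal_run B (h @ q) \<Longrightarrow> s \<in> set q \<Longrightarrow> step_bin s \<notin> closed_bins h"
  by (induction q rule: rev_induct) (auto simp: legal_run_snoc legal_step_def simp flip: append_assoc)

lemma card_open_bins_le: "legal_run B h \<Longrightarrow> h \<noteq> [] \<Longrightarrow> card (open_bins h) \<le> B"
  by (cases h rule: rev_cases) (auto simp: legal_run_snoc legal_step_def)

text \<open>A bin that is not open after \<open>h\<close> receives items from \<open>h\<close> only or from \<open>q\<close> only,
  so only the at most \<open>B\<close> bins open at that moment can carry weight up to \<open>2 w\<close>.\<close>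

lemma weight_le_bins:
  fixes f g :: "real \<Rightarrow> nat"
  assumes legal: "legal_run B (h @ q)" and "h \<noteq> []"
    and items_h: "step_item ` set h \<subseteq> X" and items_q: "step_item ` set q \<subseteq> Y"
    and nonneg: "\<forall>x \<in> X \<union> Y. 0 \<le> x"
    and f: "\<And>xs. set xs \<subseteq> X \<Longrightarrow> sum_list xs \<le> 1 \<Longrightarrow> sum_list (map f xs) \<le> w"
    and g: "\<And>xs. set xs \<subseteq> Y \<Longrightarrow> sum_list xs \<le> 1 \<Longrightarrow> sum_list (map g xs) \<le> w"
  shows "sum_list (map (f \<circ> step_item) h) + sum_list (map (g \<circ> step_item) q)
           \<le> w * (card (used_bins (h @ q)) + B)"
proof -
  define U where "U = used_bins (h @ q)"
  define bin where "bin p b = filter (\<lambda>s. step_bin s = b) p" for p b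
  define P where "P b = sum_list (map (f \<circ> step_item) (bin h b))" for b
  define Q where "Q b = sum_list (map (g \<circ> step_item) (bin q b))" for b
  have fin: "finite U"
    by (simp add: U_def used_bins_def)
  have bins_h: "step_bin ` set h \<subseteq> U" and bins_q: "step_bin ` set q \<subseteq> U"
    by (auto simp: U_def used_bins_def)
  have "sum_list (map (f \<circ> step_item) h) + sum_list (map (g \<circ> step_item) q) = (\<Sum>b\<in>U. P b + Q b)"
    unfolding sum.distrib P_def Q_def bin_def
    by (simp only: sum_list_map_group[OF fin bins_h, of "f \<circ> step_item"]
        sum_list_map_group[OF fin bins_q, of "g \<circ> step_item"])
  also have "\<dots> \<le> (\<Sum>b\<in>U. w + (if b \<in> open_bins h then w else 0))"
  proof (rule sum_mono)
    fix b
    have "\<forall>s \<in> set h \<union> set q. 0 \<le> step_item s"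
      using nonneg items_h items_q by blast
    then have "0 \<le> bin_load h b" "0 \<le> bin_load q b"
      unfolding bin_load_def by (auto intro!: sum_list_nonneg)
    moreover have "bin_load h b + bin_load q b \<le> 1"
      using bin_load_le_one[OF legal] by simp
    ultimately have "P b \<le> w" "Q b \<le> w"
      using f[of "map step_item (bin h b)"] g[of "map step_item (bin q b)"] items_h items_q
      by (auto simp: P_def Q_def bin_def bin_load_def)
    moreover have "P b = 0 \<or> Q b = 0" if "b \<notin> open_bins h"
    proof (cases "b \<in> used_bins h")
      case True
      then have "b \<in> closed_bins h"
        using that by (simp add: open_bins_def)
      then have "bin q b = []"
        using legal_run_bin_not_closed[OF legal] by (fastforce simp: bin_def filter_empty_conv)
      then show ?thesis by (simp add: Q_def)
    next
      case False
      then have "bin h b = []"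
        by (auto simp: bin_def used_bins_def filter_empty_conv)
      then show ?thesis by (simp add: P_def)
    qed
    ultimately show "P b + Q b \<le> w + (if b \<in> open_bins h then w else 0)"
      by fastforce
  qed
  also have "\<dots> = w * card U + w * card (U \<inter> open_bins h)"
    using fin by (simp add: sum.distrib sum.If_cases)
  also have "\<dots> \<le> w * card U + w * B"
    using card_mono[OF _ Int_lower2, of "open_bins h" U]
      card_open_bins_le[OF legal_run_appendD[OF legal] \<open>h \<noteq> []\<close>]
    by (simp add: open_bins_def used_bins_def)
  finally show ?thesis
    by (simp add: U_def algebra_simps)
qed

section \<open>Optimal packings\<close>

lemma card_large_items_le_bins:
  fixes I :: "real list" and k :: nat
  assumes nonneg: "\<forall>x\<in>set I. 0 \<le> x"
    and bins: "\<forall>i<length I. f i < k" and loads: "\<forall>j. (\<Sum>i | i < length I \<and> f i = j. I ! i) \<le> 1"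
  shows "card {i. i < length I \<and> 1/2 < I ! i} \<le> k"
proof -
  let ?L = "{i. i < length I \<and> 1/2 < I ! i}"
  have "inj_on f ?L"
  proof (rule inj_onI, rule ccontr)
    fix i i' assume i: "i \<in> ?L" and i': "i' \<in> ?L" and same: "f i = f i'" and "i \<noteq> i'"
    have "I ! i + I ! i' = (\<Sum>t\<in>{i, i'}. I ! t)"
      using \<open>i \<noteq> i'\<close> by simp
    also have "\<dots> \<le> (\<Sum>t | t < length I \<and> f t = f i. I ! t)"
      using i i' same nonneg by (intro sum_mono2) (auto simp: nth_mem)
    also have "\<dots> \<le> 1"
      using loads by blast
    finally show False
      using i i' by simp
  qed
  moreover have "f ` ?L \<subseteq> {..<k}"
    using bins by auto
  ultimately show ?thesis
    using card_inj_on_le[of f ?L "{..<k}"] by simp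
qed

lemma opt_eqI:
  fixes I :: "real list" and k :: nat
  assumes "\<forall>x\<in>set I. 0 \<le> x"
    and "\<forall>i<length I. f i < k" "\<forall>j. (\<Sum>i | i < length I \<and> f i = j. I ! i) \<le> 1"
    and "card {i. i < length I \<and> 1/2 < I ! i} = k"
  shows "opt I = k"
  unfolding opt_def
proof (rule Least_equality)
  show "\<exists>f. (\<forall>i<length I. f i < k) \<and> (\<forall>j. (\<Sum>i | i < length I \<and> f i = j. I ! i) \<le> 1)"
    using assms(2,3) by blast
next
  fix k' :: nat
  assume "\<exists>f. (\<forall>i<length I. f i < k') \<and> (\<forall>j. (\<Sum>i | i < length I \<and> f i = j. I ! i) \<le> 1)"
  then show "k \<le> k'"
    using card_large_items_le_bins[OF assms(1)] assms(4) by metis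
qed

section \<open>The two adversarial inputs\<close>

definition large_item :: real where "large_item = 153 / 300"

definition medium_item :: real where "medium_item = 103 / 300"

definition small_item :: real where "small_item = 44 / 300"

lemma item_sizes_distinct [simp]:
  "large_item \<noteq> medium_item" "large_item \<noteq> small_item" "medium_item \<noteq> small_item"
  "medium_item \<noteq> large_item" "small_item \<noteq> large_item" "small_item \<noteq> medium_item"
  by (simp_all add: large_item_def medium_item_def small_item_def)

lemma item_sizes_nonneg [simp]: "0 \<le> large_item" "0 \<le> medium_item" "0 \<le> small_item"
  by (simp_all add: large_item_def medium_item_def small_item_def)

definition large_small_input :: "nat \<Rightarrow> real list" where
  "large_small_input m = replicate m large_item @ replicate (3 * m) small_item"

definition large_medium_small_input :: "nat \<Rightarrow> real list" where
  "large_medium_small_input m = replicate m large_item @ replicate m medium_item @ replicate m small_item"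

lemma large_small_input_sorted_valid:
  "sorted_input (large_small_input m) \<and> valid_items (large_small_input m)"
  by (auto simp: large_small_input_def sorted_input_def valid_items_def sorted_wrt_append sorted_wrt_replicate
      large_item_def small_item_def)

lemma large_medium_small_input_sorted_valid:
  "sorted_input (large_medium_small_input m) \<and> valid_items (large_medium_small_input m)"
  by (auto simp: large_medium_small_input_def sorted_input_def valid_items_def sorted_wrt_append sorted_wrt_replicate
      large_item_def medium_item_def small_item_def)

lemma opt_large_small_input: "opt (large_small_input m) = m"
proof (rule opt_eqI)
  let ?I = "large_small_input m"
  define f where "f i = (if i < m then i else (i - m) div 3)" for i
  have len: "length ?I = 4 * m"
    by (simp add: large_small_input_def)
  show "\<forall>i<length ?I. f i < m"
    by (auto simp: len f_def)
  show "\<forall>j. (\<Sum>i | i < length ?I \<and> f i = j. ?I ! i) \<le> 1"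
  proof
    fix j
    show "(\<Sum>i | i < length ?I \<and> f i = j. ?I ! i) \<le> 1"
    proof (cases "j < m")
      case True
      then have "{i. i < length ?I \<and> f i = j} = {j, m + 3 * j, m + 3 * j + 1, m + 3 * j + 2}"
        by (auto simp: len f_def; presburger)
      then show ?thesis
        using True by (simp add: large_small_input_def nth_append large_item_def small_item_def)
    next
      case False
      then have "{i. i < length ?I \<and> f i = j} = {}"
        by (auto simp: len f_def)
      then show ?thesis by (simp only: sum.empty)
    qed
  qed
  have "{i. i < length ?I \<and> 1/2 < ?I ! i} = {..<m}"
    by (auto simp: len large_small_input_def nth_append large_item_def small_item_def)
  then show "card {i. i < length ?I \<and> 1/2 < ?I ! i} = m"
    by simp
qed (auto simp: large_small_input_def large_item_def small_item_def)

lemma opt_large_medium_small_input: "opt (large_medium_small_input m) = m"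
proof (rule opt_eqI)
  let ?I = "large_medium_small_input m"
  define f where "f i = (if i < m then i else if i < 2 * m then i - m else i - 2 * m)" for i
  have len: "length ?I = 3 * m"
    by (simp add: large_medium_small_input_def)
  show "\<forall>i<length ?I. f i < m"
    by (auto simp: len f_def)
  show "\<forall>j. (\<Sum>i | i < length ?I \<and> f i = j. ?I ! i) \<le> 1"
  proof
    fix j
    show "(\<Sum>i | i < length ?I \<and> f i = j. ?I ! i) \<le> 1"
    proof (cases "j < m")
      case True
      then have "{i. i < length ?I \<and> f i = j} = {j, j + m, j + 2 * m}"
        by (auto simp: len f_def)
      then show ?thesis
        using True by (simp add: large_medium_small_input_def nth_append
            large_item_def medium_item_def small_item_def)
    next
      case False
      then have "{i. i < length ?I \<and> f i = j} = {}"
        by (auto simp: len f_def)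
      then show ?thesis by (simp only: sum.empty)
    qed
  qed
  have "{i. i < length ?I \<and> 1/2 < ?I ! i} = {..<m}"
    by (auto simp: len large_medium_small_input_def nth_append
        large_item_def medium_item_def small_item_def)
  then show "card {i. i < length ?I \<and> 1/2 < ?I ! i} = m"
    by simp
qed (auto simp: large_medium_small_input_def large_item_def medium_item_def small_item_def)

lemma item_counts_in_bin:
  assumes "set xs \<subseteq> {large_item, medium_item, small_item}" "sum_list xs \<le> 1"
  shows "153 * count_list xs large_item + 103 * count_list xs medium_item
           + 44 * count_list xs small_item \<le> 300"
proof -
  have "sum_list xs = real (count_list xs large_item) * large_item
      + real (count_list xs medium_item) * medium_item + real (count_list xs small_item) * small_item"
    using sum_list_map_eq_sum_of_nat_count[OF _ assms(1), of id] by (simp add: algebra_simps)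
  then show ?thesis
    using assms(2) by (simp add: large_item_def medium_item_def small_item_def)
qed

lemma large_weight_in_bin_le:
  assumes "set xs \<subseteq> {large_item, small_item}" "sum_list xs \<le> 1"
  shows "sum_list (map (\<lambda>x. if x = large_item then 6 else 0) xs) \<le> (6::nat)"
proof -
  have "set xs \<subseteq> {large_item, medium_item, small_item}" "count_list xs medium_item = 0"
    using assms(1) by (auto simp: count_list_0_iff)
  then have "153 * count_list xs large_item + 44 * count_list xs small_item \<le> 300"
    using item_counts_in_bin[of xs] assms(2) by simp
  then have "count_list xs large_item \<le> 1"
    by arith
  then show ?thesis
    using sum_list_map_eq_sum_of_nat_count[OF _ assms(1), of "\<lambda>x. if x = large_item then 6 else 0 :: nat"]
    by simp
qed

lemma unit_weight_in_bin_le: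
  assumes "set xs \<subseteq> {small_item}" "sum_list xs \<le> 1"
  shows "sum_list (map (\<lambda>_. 1) xs) \<le> (6::nat)"
proof -
  have "set xs \<subseteq> {large_item, medium_item, small_item}"
    "count_list xs large_item = 0" "count_list xs medium_item = 0"
    using assms(1) by (auto simp: count_list_0_iff)
  then have "44 * count_list xs small_item \<le> 300"
    using item_counts_in_bin[of xs] assms(2) by simp
  then have "count_list xs small_item \<le> 6"
    by arith
  then show ?thesis
    using sum_list_map_eq_sum_of_nat_count[OF _ assms(1), of "\<lambda>_. 1::nat"] by simp
qed

lemma three_one_weight_in_bin_le:
  assumes "set xs \<subseteq> {large_item, small_item} \<or> set xs \<subseteq> {large_item, medium_item}"
    and "sum_list xs \<le> 1"
  shows "sum_list (map (\<lambda>x. if x = small_item then 1 else 3) xs) \<le> (6::nat)"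
  using assms(1)
proof
  assume items: "set xs \<subseteq> {large_item, small_item}"
  have "set xs \<subseteq> {large_item, medium_item, small_item}" "count_list xs medium_item = 0"
    using items by (auto simp: count_list_0_iff)
  then have "153 * count_list xs large_item + 44 * count_list xs small_item \<le> 300"
    using item_counts_in_bin[of xs] assms(2) by simp
  then have "3 * count_list xs large_item + count_list xs small_item \<le> 6"
    by arith
  then show ?thesis
    using sum_list_map_eq_sum_of_nat_count[OF _ items, of "\<lambda>x. if x = small_item then 1 else 3 :: nat"]
    by simp
next
  assume items: "set xs \<subseteq> {large_item, medium_item}"
  have "set xs \<subseteq> {large_item, medium_item, small_item}" "count_list xs small_item = 0"
    using items by (auto simp: count_list_0_iff)
  then have "153 * count_list xs large_item + 103 * count_list xs medium_item \<le> 300"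
    using item_counts_in_bin[of xs] assms(2) by simp
  then have "103 * count_list xs large_item + 103 * count_list xs medium_item \<le> 300"
    by linarith
  then have "count_list xs large_item + count_list xs medium_item \<le> 2"
    by arith
  then show ?thesis
    using sum_list_map_eq_sum_of_nat_count[OF _ items, of "\<lambda>x. if x = small_item then 1 else 3 :: nat"]
    by simp
qed

lemma ALG_large_small_input_bound:
  assumes bounded: "maxmin_bounded B A" and "0 < k"
    and prefix: "\<And>j. j < k \<Longrightarrow> heads_taken (uniform_history A large_item small_item j) < m
                             \<and> tails_taken (uniform_history A large_item small_item j) < m"
    and heads: "heads_taken (uniform_history A large_item small_item k) = m"
    and tails: "tails_taken (uniform_history A large_item small_item k) \<le> m"
  shows "7 * m \<le> 6 * (ALG A (large_small_input m) + B)"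
proof -
  let ?h = "uniform_history A large_item small_item k"
  have "?h \<noteq> []"
    using \<open>0 < k\<close> by (metis length_uniform_history list.size(3) less_irrefl)
  let ?rest = "replicate (3 * m - tails_taken ?h) small_item"
  have "run A [] (large_small_input m) = run A ?h ?rest"
    using run_uniform_prefix[of k A large_item small_item m "3 * m" "[]"] prefix heads
    by (fastforce simp: large_small_input_def)
  moreover obtain q where "run A ?h ?rest = ?h @ q" and q: "mset (map step_item q) = mset ?rest"
    using run_eq_append by blast
  ultimately have run: "run A [] (large_small_input m) = ?h @ q"
    by simp
  have legal: "legal_run B (?h @ q)"
    using bounded large_small_input_sorted_valid unfolding maxmin_bounded_def run[symmetric] by blast
  have items_q: "step_item ` set q \<subseteq> {small_item}"
    using mset_eq_setD[OF q] by auto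
  let ?f = "\<lambda>x. if x = large_item then 6 else 0 :: nat" and ?g = "\<lambda>_. 1 :: nat"
  have "sum_list (map (?f \<circ> step_item) ?h) + sum_list (map (?g \<circ> step_item) q)
      \<le> 6 * (card (used_bins (?h @ q)) + B)"
    using weight_le_bins[OF legal \<open>?h \<noteq> []\<close> step_items_uniform_history items_q _
        large_weight_in_bin_le unit_weight_in_bin_le] by simp
  moreover have "sum_list (map (?f \<circ> step_item) ?h) = 6 * m"
    using sum_list_uniform_history[of ?f] heads by simp
  moreover have "sum_list (map (?g \<circ> step_item) q) = 3 * m - tails_taken ?h"
    using sum_list_map_mset_eq[OF q, of ?g] by (simp add: sum_list_replicate)
  ultimately show ?thesis
    using tails by (simp add: ALG_def run)
qed

lemma ALG_large_medium_small_input_bound: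
  assumes bounded: "maxmin_bounded B A" and "0 < k"
    and prefix: "\<And>j. j < k \<Longrightarrow> heads_taken (uniform_history A large_item small_item j) < m
                             \<and> tails_taken (uniform_history A large_item small_item j) < m"
    and heads: "heads_taken (uniform_history A large_item small_item k) \<le> m"
    and tails: "tails_taken (uniform_history A large_item small_item k) = m"
  shows "7 * m \<le> 6 * (ALG A (large_medium_small_input m) + B)"
proof -
  let ?h = "uniform_history A large_item small_item k"
  have "?h \<noteq> []"
    using \<open>0 < k\<close> by (metis length_uniform_history list.size(3) less_irrefl)
  let ?rest = "replicate (m - heads_taken ?h) large_item @ replicate m medium_item"
  have "run A [] (large_medium_small_input m) = run A ?h ?rest"
    using run_uniform_prefix[of k A large_item small_item m m "replicate m medium_item"] prefix tails
    by (simp add: large_medium_small_input_def)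
  moreover obtain q where "run A ?h ?rest = ?h @ q" and q: "mset (map step_item q) = mset ?rest"
    using run_eq_append by blast
  ultimately have run: "run A [] (large_medium_small_input m) = ?h @ q"
    by simp
  have legal: "legal_run B (?h @ q)"
    using bounded large_medium_small_input_sorted_valid
    unfolding maxmin_bounded_def run[symmetric] by blast
  have items_q: "step_item ` set q \<subseteq> {large_item, medium_item}"
    using mset_eq_setD[OF q] by auto
  let ?f = "\<lambda>x. if x = small_item then 1 else 3 :: nat"
  have "sum_list (map (?f \<circ> step_item) ?h) + sum_list (map (?f \<circ> step_item) q)
      \<le> 6 * (card (used_bins (?h @ q)) + B)"
    using weight_le_bins[OF legal \<open>?h \<noteq> []\<close> step_items_uniform_history items_q _
        three_one_weight_in_bin_le three_one_weight_in_bin_le] by simp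
  moreover have "sum_list (map (?f \<circ> step_item) ?h) = 3 * heads_taken ?h + m"
    using sum_list_uniform_history[of ?f] tails by simp
  moreover have "sum_list (map (?f \<circ> step_item) q) = 3 * (m - heads_taken ?h) + 3 * m"
    using sum_list_map_mset_eq[OF q, of ?f] by (simp add: sum_list_replicate)
  ultimately show ?thesis
    using heads by (simp add: ALG_def run)
qed

theorem theorem3:
  fixes B m :: nat and A :: maxmin_alg
  assumes "B > 0" and "maxmin_bounded B A"
    and "m > 0" and "m \<ge> 2 * B" and "3 dvd m"
  shows "\<exists>I. sorted_input I \<and> valid_items I \<and> opt I = m \<and>
           real (ALG A I) \<ge> 7 / 6 * real (opt I) - real B"
proof -
  obtain k where "0 < k"
    and "\<And>j. j < k \<Longrightarrow> heads_taken (uniform_history A large_item small_item j) < m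
                       \<and> tails_taken (uniform_history A large_item small_item j) < m"
    and "heads_taken (uniform_history A large_item small_item k) \<le> m"
    and "tails_taken (uniform_history A large_item small_item k) \<le> m"
    and "heads_taken (uniform_history A large_item small_item k) = m
         \<or> tails_taken (uniform_history A large_item small_item k) = m"
    using uniform_history_stopping_time[OF \<open>m > 0\<close>] by metis
  then obtain I where I: "I \<in> {large_small_input m, large_medium_small_input m}"
    and bound: "7 * m \<le> 6 * (ALG A I + B)"
    using ALG_large_small_input_bound[OF \<open>maxmin_bounded B A\<close>]
      ALG_large_medium_small_input_bound[OF \<open>maxmin_bounded B A\<close>] by blast
  have "sorted_input I" "valid_items I" "opt I = m"
    using I large_small_input_sorted_valid large_medium_small_input_sorted_valid
      opt_large_small_input opt_large_medium_small_input by auto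
  moreover have "real (7 * m) \<le> real (6 * (ALG A I + B))"
    using bound by (simp only: of_nat_le_iff)
  then have "7 / 6 * real m - real B \<le> real (ALG A I)"
    by simp
  ultimately show ?thesis
    by (intro exI[of _ I]) simp
qed

end
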